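(* For every integer $n\ge 1$, the polytope $\overline{Q}_n=\sum_{S\in\mathcal{I}_n}\Delta_S\subseteq\mathbb{R}^{n+1}$ is simple and $n$-dimensional.
   Context: The sum is a Minkowski sum. $\mathcal{I}_n=\{S\cup\{n+1\} : S\subseteq[n],\ |S|\in\{1,2\}\}$, and for $S\subseteq[n+1]$, $\Delta_S=\mathrm{conv}\{e_i: i\in S\}$ with $e_i$ the standard basis vectors of $\mathbb{R}^{n+1}$. A $d$-dimensional polytope is simple if each vertex lies in exactly $d$ facets. *)

theory Defs
  imports "HOL-Analysis.Analysis"
begin

text \<open>Ambient space R^(n+1) is modelled as real^'m with CARD('m) = n+1; the
distinguished coordinate "n+1" is an arbitrary fixed index j :: 'm.\<close>

definition simplexS :: "'m::finite set \<Rightarrow> (real^'m) set" where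
  "simplexS S = convex hull {axis i 1 | i. i \<in> S}"

definition index_family :: "'m::finite \<Rightarrow> 'm set set" where
  "index_family j = {insert j S | S. S \<subseteq> UNIV - {j} \<and> card S \<in> {1, 2}}"

definition minkowski_sum :: "'i set \<Rightarrow> ('i \<Rightarrow> 'a::ab_group_add set) \<Rightarrow> 'a set" where
  "minkowski_sum I A = {(\<Sum>S\<in>I. f S) | f. \<forall>S\<in>I. f S \<in> A S}"

definition Qbar :: "'m::finite \<Rightarrow> (real^'m) set" where
  "Qbar j = minkowski_sum (index_family j) simplexS"

definition simple_polytope :: "'a::euclidean_space set \<Rightarrow> bool" where
  "simple_polytope P \<longleftrightarrow> polytope P \<and>
     (\<forall>v. {v} face_of P \<longrightarrow> card {F. F facet_of P \<and> v \<in> F} = nat (aff_dim P))"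

end

theory Submission
  imports Defs
begin

(* Write J for the coordinates other than j and f(b) = b (2n + 1 - b) / 2 (hit_count n b below),
   the number of members of the family meeting a b-subset of J.  The sum Qbar j is the polytope H
   of the hyperplane sum_k x_k = f(n) cut out by x_i >= 0 (i in J) and sum_{i in B} x_i <= f(|B|)
   (B a nonempty subset of J); the inclusion of Qbar j in H is a count.  Since f is strictly
   concave, the sets B that are tight at a point x of H form a chain and avoid the zero coordinates
   of x.  Choosing from every member S of the family the admissible element lying in the most tight
   sets gives a point of Qbar j with all the tight constraints of x; at a vertex x this point is x
   itself, so H = Qbar j by Krein-Milman.  Every constraint is irredundant, hence defines its own
   facet, and at a vertex exactly n constraints are tight: at least n because they determine the
   vertex, at most n because the tight sets form a chain of nonempty subsets of J avoiding the
   zero coordinates. *)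

section \<open>Polyhedra cut out of a hyperplane by half-spaces\<close>

locale halfspace_system =
  fixes u :: "'a::euclidean_space" and \<beta> :: real
    and C :: "'c set" and a :: "'c \<Rightarrow> 'a" and b :: "'c \<Rightarrow> real"
  assumes finite_C: "finite C"
begin

definition region :: "'a set" where
  "region = {x. u \<bullet> x = \<beta> \<and> (\<forall>c\<in>C. a c \<bullet> x \<le> b c)}"

definition tight :: "'a \<Rightarrow> 'c set" where
  "tight x = {c\<in>C. a c \<bullet> x = b c}"

lemma tight_subset: "tight x \<subseteq> C"
  by (auto simp: tight_def)

lemma polyhedron_region: "polyhedron region"
proof -
  have "region = {x. u \<bullet> x = \<beta>} \<inter> \<Inter> ((\<lambda>c. {x. a c \<bullet> x \<le> b c}) ` C)"
    by (auto simp: region_def)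
  then show ?thesis
    using finite_C by (auto intro!: polyhedron_hyperplane polyhedron_halfspace_le)
qed

lemma region_perturb:
  assumes x: "x \<in> region" and "u \<bullet> d = 0" and "\<And>c. c \<in> tight x \<Longrightarrow> a c \<bullet> d = 0"
  shows "\<forall>\<^sub>F s in nhds 0. x + s *\<^sub>R d \<in> region"
proof -
  have "\<forall>\<^sub>F s in nhds 0. \<forall>c\<in>C - tight x. a c \<bullet> (x + s *\<^sub>R d) < b c"
  proof (intro eventually_ball_finite ballI)
    fix c assume c: "c \<in> C - tight x"
    have "((\<lambda>s. a c \<bullet> (x + s *\<^sub>R d)) \<longlongrightarrow> a c \<bullet> (x + 0 *\<^sub>R d)) (nhds 0)"
      by (intro tendsto_intros filterlim_ident)
    moreover have "a c \<bullet> x < b c"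
      using x c by (auto simp: region_def tight_def order.strict_iff_order)
    ultimately show "\<forall>\<^sub>F s in nhds 0. a c \<bullet> (x + s *\<^sub>R d) < b c"
      by (simp add: order_tendstoD)
  qed (use finite_C in auto)
  then show ?thesis
  proof eventually_elim
    case (elim s)
    have "a c \<bullet> (x + s *\<^sub>R d) \<le> b c" if "c \<in> C" for c
    proof (cases "c \<in> tight x")
      case True
      then show ?thesis
        using assms(3) by (simp add: tight_def inner_add_right)
    next
      case False
      then show ?thesis
        using elim that by (meson DiffI less_imp_le)
    qed
    then show ?case
      using x assms(2) by (simp add: region_def inner_add_right)
  qed
qed

lemma extreme_point_region_direction:
  assumes x: "x extreme_point_of region"
    and "u \<bullet> d = 0" and "\<And>c. c \<in> tight x \<Longrightarrow> a c \<bullet> d = 0"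
  shows "d = 0"
proof (rule ccontr)
  assume "d \<noteq> 0"
  have "x \<in> region"
    using x by (simp add: extreme_point_of_def)
  then have "\<forall>\<^sub>F s in nhds 0. x + s *\<^sub>R d \<in> region"
    using assms by (intro region_perturb) auto
  then obtain e where "e > 0" and e: "\<And>s. dist s 0 < e \<Longrightarrow> x + s *\<^sub>R d \<in> region"
    unfolding eventually_nhds_metric by blast
  have "x = midpoint (x - (e/2) *\<^sub>R d) (x + (e/2) *\<^sub>R d)"
    by (simp add: midpoint_def algebra_simps flip: scaleR_2)
  moreover have "x - (e/2) *\<^sub>R d \<noteq> x + (e/2) *\<^sub>R d"
    using \<open>e > 0\<close> \<open>d \<noteq> 0\<close> by (simp add: algebra_simps flip: scaleR_2)
  ultimately have "x \<in> open_segment (x - (e/2) *\<^sub>R d) (x + (e/2) *\<^sub>R d)"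
    by (metis midpoint_in_open_segment)
  moreover have "x - (e/2) *\<^sub>R d \<in> region" "x + (e/2) *\<^sub>R d \<in> region"
    using e[of "-(e/2)"] e[of "e/2"] \<open>e > 0\<close> by auto
  ultimately show False
    using x by (auto simp: extreme_point_of_def)
qed

lemma card_tight_extreme_point:
  assumes x: "x extreme_point_of region"
  shows "DIM('a) \<le> card (tight x) + 1"
proof -
  let ?V = "insert u (a ` tight x)"
  have "span ?V = UNIV"
  proof (rule ccontr)
    assume "span ?V \<noteq> UNIV"
    then obtain d where "d \<noteq> 0" and d: "\<And>y. y \<in> span ?V \<Longrightarrow> d \<bullet> y = 0"
      by (metis span_not_UNIV_orthogonal)
    have "d = 0"
      by (rule extreme_point_region_direction[OF x]) (auto simp: inner_commute intro!: d span_base)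
    with \<open>d \<noteq> 0\<close> show False ..
  qed
  have "finite (tight x)"
    using finite_subset[OF tight_subset finite_C] .
  have "DIM('a) = dim (span ?V)"
    using \<open>span ?V = UNIV\<close> by simp
  also have "\<dots> \<le> card ?V"
    by (rule dim_le_card) (use \<open>finite (tight x)\<close> in auto)
  also have "\<dots> \<le> card (a ` tight x) + 1"
    using \<open>finite (tight x)\<close> by (simp add: card_insert_if)
  also have "\<dots> \<le> card (tight x) + 1"
    using card_image_le[OF \<open>finite (tight x)\<close>] by simp
  finally show ?thesis .
qed

lemma affine_hull_region:
  assumes x0: "x0 \<in> region" "tight x0 = {}"
  shows "affine hull region = {x. u \<bullet> x = \<beta>}"
proof
  show "affine hull region \<subseteq> {x. u \<bullet> x = \<beta>}"
    by (intro hull_minimal affine_hyperplane) (auto simp: region_def)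
  show "{x. u \<bullet> x = \<beta>} \<subseteq> affine hull region"
  proof
    fix p assume "p \<in> {x. u \<bullet> x = \<beta>}"
    then have "u \<bullet> (p - x0) = 0"
      using x0 by (simp add: region_def inner_diff_right)
    then have "\<forall>\<^sub>F s in nhds 0. x0 + s *\<^sub>R (p - x0) \<in> region"
      using x0 by (intro region_perturb) auto
    then obtain e where "e > 0" and e: "\<And>s. dist s 0 < e \<Longrightarrow> x0 + s *\<^sub>R (p - x0) \<in> region"
      unfolding eventually_nhds_metric by blast
    define s where "s = e / 2"
    have "s > 0" and s: "x0 + s *\<^sub>R (p - x0) \<in> region"
      using e \<open>e > 0\<close> by (auto simp: s_def)
    have "p = (1 - 1/s) *\<^sub>R x0 + (1/s) *\<^sub>R (x0 + s *\<^sub>R (p - x0))"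
      using \<open>s > 0\<close> by (simp add: algebra_simps)
    also have "\<dots> \<in> affine hull region"
      by (intro mem_affine[OF affine_affine_hull] hull_inc x0(1) s) simp
    finally show "p \<in> affine hull region" .
  qed
qed

end

locale irredundant_halfspace_system = halfspace_system +
  fixes x0 and w
  assumes x0_hyperplane: "u \<bullet> x0 = \<beta>"
    and x0_strict: "\<And>c. c \<in> C \<Longrightarrow> a c \<bullet> x0 < b c"
    and w_hyperplane: "\<And>c. c \<in> C \<Longrightarrow> u \<bullet> w c = \<beta>"
    and w_violates: "\<And>c. c \<in> C \<Longrightarrow> b c < a c \<bullet> w c"
    and w_satisfies_others: "\<And>c c'. c \<in> C \<Longrightarrow> c' \<in> C \<Longrightarrow> c' \<noteq> c \<Longrightarrow> a c' \<bullet> w c \<le> b c'"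
begin

lemma x0_in_region: "x0 \<in> region"
  using x0_hyperplane x0_strict by (auto simp: region_def less_imp_le)

lemma tight_x0: "tight x0 = {}"
  using x0_strict by (force simp: tight_def)

lemma aff_dim_region:
  assumes "u \<noteq> 0"
  shows "aff_dim region = DIM('a) - 1"
proof -
  have "aff_dim region = aff_dim (affine hull region)"
    by simp
  also have "\<dots> = DIM('a) - 1"
    using assms by (simp add: affine_hull_region[OF x0_in_region tight_x0])
  finally show ?thesis .
qed

lemma normal_nonzero: "c \<in> C \<Longrightarrow> a c \<noteq> 0"
  using x0_strict w_violates by force

lemma inj_on_halfspace: "inj_on (\<lambda>c. {x. a c \<bullet> x \<le> b c}) C"
proof (rule inj_onI, rule ccontr)
  fix c c' assume "c \<in> C" "c' \<in> C" and eq: "{x. a c \<bullet> x \<le> b c} = {x. a c' \<bullet> x \<le> b c'}" and "c \<noteq> c'"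
  then have "w c \<in> {x. a c' \<bullet> x \<le> b c'}"
    by (auto intro: w_satisfies_others)
  then have "w c \<in> {x. a c \<bullet> x \<le> b c}"
    using eq by simp
  then show False
    using w_violates[OF \<open>c \<in> C\<close>] by simp
qed

lemma exists_tight_singleton:
  assumes c: "c \<in> C"
  shows "\<exists>p\<in>region. tight p = {c}"
proof -
  define t where "t = (b c - a c \<bullet> x0) / (a c \<bullet> w c - a c \<bullet> x0)"
  have "0 < t" "t < 1"
    using x0_strict[OF c] w_violates[OF c] by (simp_all add: t_def)
  define p where "p = (1 - t) *\<^sub>R x0 + t *\<^sub>R w c"
  have lin: "g \<bullet> p = (1 - t) * (g \<bullet> x0) + t * (g \<bullet> w c)" for g
    by (simp add: p_def inner_add_right)
  have "a c \<bullet> p = a c \<bullet> x0 + t * (a c \<bullet> w c - a c \<bullet> x0)"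
    unfolding lin by (simp add: algebra_simps)
  also have "\<dots> = b c"
    using x0_strict[OF c] w_violates[OF c] by (simp add: t_def)
  finally have "a c \<bullet> p = b c" .
  moreover have strict: "a c' \<bullet> p < b c'" if "c' \<in> C" "c' \<noteq> c" for c'
  proof -
    have "(1 - t) * (a c' \<bullet> x0) < (1 - t) * b c'"
      using \<open>t < 1\<close> x0_strict[OF \<open>c' \<in> C\<close>] by simp
    moreover have "t * (a c' \<bullet> w c) \<le> t * b c'"
      using \<open>0 < t\<close> w_satisfies_others[OF c that] by simp
    ultimately show ?thesis
      unfolding lin by (simp add: algebra_simps)
  qed
  ultimately have "a c' \<bullet> p \<le> b c'" if "c' \<in> C" for c'
    using that by (cases "c' = c") (auto intro: less_imp_le)
  moreover have "u \<bullet> p = \<beta>"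
    using x0_hyperplane w_hyperplane[OF c] unfolding lin by (simp add: algebra_simps)
  ultimately have "p \<in> region"
    by (simp add: region_def)
  moreover have "tight p = {c}"
    using strict c \<open>a c \<bullet> p = b c\<close> by (force simp: tight_def)
  ultimately show ?thesis
    by blast
qed

lemma facet_of_region_iff:
  "F facet_of region \<longleftrightarrow> (\<exists>c\<in>C. F = region \<inter> {x. a c \<bullet> x = b c})"
proof -
  define hs where "hs = (\<lambda>c. {x. a c \<bullet> x \<le> b c})"
  define c_of where "c_of = inv_into C hs"
  have c_of: "c_of (hs c) = c" if "c \<in> C" for c
    using inv_into_f_f[OF inj_on_halfspace that] by (simp add: c_of_def hs_def)
  have aff: "affine hull region = {x. u \<bullet> x = \<beta>}"
    by (rule affine_hull_region[OF x0_in_region tight_x0])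
  have seq: "region = affine hull region \<inter> \<Inter>(hs ` C)"
    unfolding aff by (auto simp: region_def hs_def)
  have faceq: "a (c_of h) \<noteq> 0 \<and> h = {x. a (c_of h) \<bullet> x \<le> b (c_of h)}" if "h \<in> hs ` C" for h
    using that c_of normal_nonzero by (auto simp: hs_def)
  have psub: "region \<subset> affine hull region \<inter> \<Inter>F'" if F': "F' \<subset> hs ` C" for F'
  proof -
    obtain c where c: "c \<in> C" "hs c \<notin> F'"
      using F' by blast
    have "F' \<subseteq> hs ` (C - {c})"
      using F' c by blast
    then have "w c \<in> affine hull region \<inter> \<Inter>F'"
      using c w_hyperplane w_satisfies_others unfolding aff by (fastforce simp: hs_def)
    moreover have "w c \<notin> region"
      using c w_violates by (fastforce simp: region_def)
    moreover have "region \<subseteq> affine hull region \<inter> \<Inter>F'"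
      using seq F' by blast
    ultimately show ?thesis
      by blast
  qed
  have "F facet_of region \<longleftrightarrow> (\<exists>h. h \<in> hs ` C \<and> F = region \<inter> {x. a (c_of h) \<bullet> x = b (c_of h)})"
    by (rule facet_of_polyhedron_explicit[OF finite_imageI[OF finite_C] seq faceq psub])
  also have "\<dots> \<longleftrightarrow> (\<exists>c\<in>C. F = region \<inter> {x. a c \<bullet> x = b c})"
    using c_of by auto
  finally show ?thesis .
qed

lemma inj_on_facet: "inj_on (\<lambda>c. region \<inter> {x. a c \<bullet> x = b c}) C"
proof (rule inj_onI)
  fix c c' assume "c \<in> C" "c' \<in> C" and eq: "region \<inter> {x. a c \<bullet> x = b c} = region \<inter> {x. a c' \<bullet> x = b c'}"
  obtain p where "p \<in> region" and p: "tight p = {c}"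
    using exists_tight_singleton[OF \<open>c \<in> C\<close>] by blast
  then have "p \<in> region \<inter> {x. a c' \<bullet> x = b c'}"
    using eq by (auto simp: tight_def)
  then have "c' \<in> tight p"
    using \<open>c' \<in> C\<close> by (simp add: tight_def)
  then show "c = c'"
    using p by simp
qed

lemma card_facets_containing:
  assumes "v \<in> region"
  shows "card {F. F facet_of region \<and> v \<in> F} = card (tight v)"
proof -
  have "{F. F facet_of region \<and> v \<in> F} = (\<lambda>c. region \<inter> {x. a c \<bullet> x = b c}) ` tight v"
    using assms by (auto simp: facet_of_region_iff tight_def)
  then show ?thesis
    using inj_on_subset[OF inj_on_facet tight_subset] by (simp add: card_image)
qed

end

section \<open>Counting the members of the family that meet a set\<close>

definition hit_count :: "nat \<Rightarrow> nat \<Rightarrow> real" where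
  "hit_count n k = real k * (2 * real n + 1 - real k) / 2"

lemma hit_count_double: "2 * hit_count n k = real k * (2 * real n + 1 - real k)"
  by (simp add: hit_count_def)

lemma hit_count_0 [simp]: "hit_count n 0 = 0"
  by (simp add: hit_count_def)

lemma hit_count_Suc: "hit_count n (Suc k) = hit_count n k + real n - real k"
proof -
  have "2 * hit_count n (Suc k) = 2 * hit_count n k + 2 * real n - 2 * real k"
    unfolding hit_count_double by (simp add: algebra_simps)
  then show ?thesis
    by simp
qed

lemma hit_count_strict_mono:
  assumes "l < k" "k \<le> n"
  shows "hit_count n l < hit_count n k"
proof -
  have "2 * hit_count n k - 2 * hit_count n l = (real k - real l) * (2 * real n + 1 - real k - real l)"
    unfolding hit_count_double by algebra
  moreover have "0 < (real k - real l) * (2 * real n + 1 - real k - real l)"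
    using assms by (intro mult_pos_pos) auto
  ultimately show ?thesis
    by linarith
qed

lemma hit_count_mono:
  assumes "l \<le> k" "k \<le> n"
  shows "hit_count n l \<le> hit_count n k"
proof (cases "l = k")
  case False
  then show ?thesis
    using assms hit_count_strict_mono[of l k n] by simp
qed simp

lemma hit_count_ge:
  assumes "k \<le> n"
  shows "real k \<le> hit_count n k"
proof (cases "k = 0")
  case False
  then have "real k * 2 \<le> real k * (2 * real n + 1 - real k)"
    using assms by (intro mult_left_mono) auto
  then show ?thesis
    by (simp add: hit_count_def)
qed simp

lemma hit_count_add_less:
  assumes "l < k" "l < m" "p + l = k + m"
  shows "hit_count n p + hit_count n l < hit_count n k + hit_count n m"
proof -
  have p: "real p = real k + real m - real l"
    using assms(3) by (metis add_diff_cancel_right' of_nat_add)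
  have "2 * hit_count n k + 2 * hit_count n m - 2 * hit_count n p - 2 * hit_count n l
      = 2 * ((real k - real l) * (real m - real l))"
    unfolding hit_count_double p by algebra
  moreover have "0 < (real k - real l) * (real m - real l)"
    using assms by (intro mult_pos_pos) auto
  ultimately show ?thesis
    by linarith
qed

lemma hit_count_average_le:
  assumes "l < k"
  shows "real l * (hit_count n k + 1/2) \<le> real k * hit_count n l"
proof -
  have "real k * (2 * hit_count n l) - real l * (2 * hit_count n k) = real l * (real k * (real k - real l))"
    unfolding hit_count_double by algebra
  moreover have "1 * 1 \<le> real k * (real k - real l)"
    using assms by (intro mult_mono) auto
  then have "real l \<le> real l * (real k * (real k - real l))"
    by (simp add: mult_le_cancel_left1)
  ultimately show ?thesis
    by (simp add: algebra_simps)
qed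

lemma real_choose_two: "2 * real (m choose 2) = real m * (real m - 1)"
  by (induction m) (auto simp: numeral_2_eq_2 algebra_simps)

lemma card_small_subsets:
  assumes "finite X"
  shows "card {T. T \<subseteq> X \<and> card T \<in> {1, 2}} = card X + (card X choose 2)"
proof -
  have fin: "finite {T. T \<subseteq> X \<and> card T = k}" for k
    using assms by (auto intro: finite_subset[of _ "Pow X"])
  have "{T. T \<subseteq> X \<and> card T \<in> {1, 2}} = {T. T \<subseteq> X \<and> card T = 1} \<union> {T. T \<subseteq> X \<and> card T = 2}"
    by auto
  then show ?thesis
    using assms fin by (simp add: card_Un_disjoint disjoint_iff n_subsets)
qed

lemma card_small_subsets_hitting:
  assumes X: "finite X" and B: "B \<subseteq> X"
  shows "real (card {T. T \<subseteq> X \<and> card T \<in> {1, 2} \<and> T \<inter> B \<noteq> {}}) = hit_count (card X) (card B)"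
proof -
  define small where "small Y = {T. T \<subseteq> Y \<and> card T \<in> {1, 2}}" for Y :: "'a set"
  define m where "m = card X"
  define b where "b = card B"
  have "b \<le> m" "card (X - B) = m - b"
    using X B by (auto simp: m_def b_def card_Diff_subset finite_subset card_mono)
  have "small (X - B) \<subseteq> small X" "finite (small X)"
    using X by (auto simp: small_def intro: finite_subset[of _ "Pow X"])
  then have "real (card (small X - small (X - B))) = real (card (small X)) - real (card (small (X - B)))"
    by (simp add: card_Diff_subset card_mono of_nat_diff finite_subset)
  also have "\<dots> = (real m + real (m choose 2)) - (real (m - b) + real ((m - b) choose 2))"
  proof -
    have "card (small X) = m + (m choose 2)"
      unfolding small_def m_def using card_small_subsets[OF X] .
    moreover have "card (small (X - B)) = (m - b) + ((m - b) choose 2)"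
      unfolding small_def using card_small_subsets[of "X - B"] X \<open>card (X - B) = m - b\<close> by simp
    ultimately show ?thesis
      by simp
  qed
  also have "\<dots> = hit_count m b"
  proof -
    have "2 * real (m choose 2) = real m * (real m - 1)"
      "2 * real ((m - b) choose 2) = (real m - real b) * (real m - real b - 1)"
      using real_choose_two \<open>b \<le> m\<close> by (auto simp: of_nat_diff)
    moreover have "real (m - b) = real m - real b"
      using \<open>b \<le> m\<close> by (simp add: of_nat_diff)
    ultimately have "2 * ((real m + real (m choose 2)) - (real (m - b) + real ((m - b) choose 2)))
        = 2 * hit_count m b"
      unfolding hit_count_double by (simp add: algebra_simps)
    then show ?thesis
      by simp
  qed
  moreover have "{T. T \<subseteq> X \<and> card T \<in> {1, 2} \<and> T \<inter> B \<noteq> {}} = small X - small (X - B)"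
    by (auto simp: small_def)
  ultimately show ?thesis
    by (simp add: m_def b_def)
qed

section \<open>Minkowski sums of coordinate simplices\<close>

lemma convex_minkowski_sum:
  fixes A :: "'i \<Rightarrow> 'a::real_vector set"
  assumes "\<And>i. i \<in> I \<Longrightarrow> convex (A i)"
  shows "convex (minkowski_sum I A)"
proof (rule convexI)
  fix x y :: 'a and s t :: real
  assume "x \<in> minkowski_sum I A" "y \<in> minkowski_sum I A" and st: "0 \<le> s" "0 \<le> t" "s + t = 1"
  then obtain f g where x: "x = (\<Sum>i\<in>I. f i)" "\<forall>i\<in>I. f i \<in> A i"
    and y: "y = (\<Sum>i\<in>I. g i)" "\<forall>i\<in>I. g i \<in> A i"
    by (auto simp: minkowski_sum_def)
  have "s *\<^sub>R x + t *\<^sub>R y = (\<Sum>i\<in>I. s *\<^sub>R f i + t *\<^sub>R g i)"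
    by (simp add: x y sum.distrib scaleR_sum_right)
  moreover have "\<forall>i\<in>I. s *\<^sub>R f i + t *\<^sub>R g i \<in> A i"
    using assms x y st by (auto intro: convexD)
  ultimately show "s *\<^sub>R x + t *\<^sub>R y \<in> minkowski_sum I A"
    by (auto simp: minkowski_sum_def)
qed

lemma convex_simplexS: "convex (simplexS S)"
  by (simp add: simplexS_def)

lemma axis_in_simplexS: "i \<in> S \<Longrightarrow> axis i 1 \<in> simplexS S"
  unfolding simplexS_def by (rule hull_inc) auto

lemma simplexS_subset:
  "simplexS S \<subseteq> {p. (\<forall>k. 0 \<le> p $ k) \<and> (\<forall>k. k \<notin> S \<longrightarrow> p $ k = 0) \<and> sum (($) p) UNIV = 1}"
  unfolding simplexS_def
proof (rule hull_minimal)
  show "{axis i (1::real) |i. i \<in> S}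
      \<subseteq> {p. (\<forall>k. 0 \<le> p $ k) \<and> (\<forall>k. k \<notin> S \<longrightarrow> p $ k = 0) \<and> sum (($) p) UNIV = 1}"
    by (auto simp: axis_def)
  show "convex {p :: real^'a. (\<forall>k. 0 \<le> p $ k) \<and> (\<forall>k. k \<notin> S \<longrightarrow> p $ k = 0) \<and> sum (($) p) UNIV = 1}"
    by (auto simp: convex_def sum.distrib simp flip: sum_distrib_left)
qed

lemma minkowski_sum_simplexS_component:
  fixes x :: "real^'m"
  assumes x: "x \<in> minkowski_sum F simplexS" and F: "finite F"
  shows "0 \<le> x $ k"
    and "(\<Sum>k\<in>B. x $ k) \<le> real (card {S\<in>F. S \<inter> B \<noteq> {}})"
    and "sum (($) x) UNIV = real (card F)"
proof -
  obtain g where x_eq: "x = (\<Sum>S\<in>F. g S)" and g: "\<And>S. S \<in> F \<Longrightarrow> g S \<in> simplexS S"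
    using x by (auto simp: minkowski_sum_def)
  have g_nonneg: "0 \<le> g S $ k" and g_zero: "k \<notin> S \<Longrightarrow> g S $ k = 0"
    and g_sum: "sum (($) (g S)) UNIV = 1" if "S \<in> F" for S k
    using simplexS_subset g[OF that] by blast+
  show "0 \<le> x $ k"
    unfolding x_eq sum_component by (intro sum_nonneg g_nonneg)
  have "(\<Sum>k\<in>B. x $ k) = (\<Sum>S\<in>F. \<Sum>k\<in>B. g S $ k)"
    unfolding x_eq sum_component by (rule sum.swap)
  also have "\<dots> \<le> (\<Sum>S\<in>F. of_bool (S \<inter> B \<noteq> {}))"
  proof (intro sum_mono)
    fix S assume "S \<in> F"
    show "(\<Sum>k\<in>B. g S $ k) \<le> of_bool (S \<inter> B \<noteq> {})"
    proof (cases "S \<inter> B = {}")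
      case True
      then have "(\<Sum>k\<in>B. g S $ k) = 0"
        using g_zero[OF \<open>S \<in> F\<close>] by (intro sum.neutral) blast
      then show ?thesis
        by simp
    next
      case False
      have "(\<Sum>k\<in>B. g S $ k) \<le> sum (($) (g S)) UNIV"
        using g_nonneg[OF \<open>S \<in> F\<close>] by (intro sum_mono2) auto
      then show ?thesis
        using False g_sum[OF \<open>S \<in> F\<close>] by simp
    qed
  qed
  also have "\<dots> = real (card {S\<in>F. S \<inter> B \<noteq> {}})"
    using F by (simp add: Int_def)
  finally show "(\<Sum>k\<in>B. x $ k) \<le> real (card {S\<in>F. S \<inter> B \<noteq> {}})" .
  have "sum (($) x) UNIV = (\<Sum>S\<in>F. sum (($) (g S)) UNIV)"
    unfolding x_eq sum_component by (rule sum.swap)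
  then show "sum (($) x) UNIV = real (card F)"
    using g_sum by simp
qed

lemma sum_axis_count:
  fixes g :: "'s \<Rightarrow> 'm::finite"
  assumes "finite F"
  shows "(\<Sum>k\<in>B. (\<Sum>S\<in>F. axis (g S) (1::real)) $ k) = real (card {S\<in>F. g S \<in> B})"
proof -
  have "(\<Sum>k\<in>B. (\<Sum>S\<in>F. axis (g S) (1::real)) $ k) = (\<Sum>k\<in>B. \<Sum>S\<in>F. if k = g S then 1 else 0)"
    by (simp add: axis_def)
  also have "\<dots> = (\<Sum>S\<in>F. \<Sum>k\<in>B. if k = g S then 1 else 0)"
    by (rule sum.swap)
  also have "\<dots> = (\<Sum>S\<in>F. if g S \<in> B then 1 else 0)"
    by (simp add: sum.delta)
  also have "\<dots> = real (card {S\<in>F. g S \<in> B})"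
    using assms by (simp add: sum.If_cases Int_def)
  finally show ?thesis .
qed

section \<open>Chains of finite sets\<close>

lemma card_le_card_Union_chain:
  assumes chain: "chain\<^sub>\<subseteq> \<C>" and "{} \<notin> \<C>" and fin: "finite (\<Union>\<C>)"
  shows "card \<C> \<le> card (\<Union>\<C>)"
proof -
  have fin_mem: "finite B" if "B \<in> \<C>" for B
    using that fin by (meson Union_upper finite_subset)
  have "inj_on card \<C>"
  proof (rule inj_onI)
    fix B B' assume "B \<in> \<C>" "B' \<in> \<C>" "card B = card B'"
    then show "B = B'"
      using chain fin_mem by (metis card_subset_eq chain_subset_def)
  qed
  moreover have "card ` \<C> \<subseteq> {1..card (\<Union>\<C>)}"
    using assms fin_mem by (auto simp: Suc_le_eq card_gt_0_iff intro!: card_mono)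
  ultimately show ?thesis
    by (metis card_atLeastAtMost card_image card_mono diff_Suc_1 finite_atLeastAtMost)
qed

lemma chain_mem_of_card_avoiding_le:
  assumes chain: "chain\<^sub>\<subseteq> \<C>" and "finite \<C>" and B: "B \<in> \<C>" "b \<in> B"
    and le: "card {B' \<in> \<C>. k \<notin> B'} \<le> card {B' \<in> \<C>. b \<notin> B'}"
  shows "k \<in> B"
proof (rule ccontr)
  assume "k \<notin> B"
  have "{B' \<in> \<C>. b \<notin> B'} \<subseteq> {B' \<in> \<C>. k \<notin> B'}"
    using chain B \<open>k \<notin> B\<close> by (auto simp: chain_subset_def)
  moreover have "B \<in> {B' \<in> \<C>. k \<notin> B'} - {B' \<in> \<C>. b \<notin> B'}"
    using B \<open>k \<notin> B\<close> by simp
  ultimately have "card {B' \<in> \<C>. b \<notin> B'} < card {B' \<in> \<C>. k \<notin> B'}"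
    using \<open>finite \<C>\<close> by (intro psubset_card_mono) auto
  with le show False
    by simp
qed

section \<open>The sum as a polytope\<close>

datatype 'i qbar_ineq = Nonneg 'i | Cap "'i set"

primrec ineq_normal :: "'i::finite qbar_ineq \<Rightarrow> real^'i" where
  "ineq_normal (Nonneg i) = - axis i 1"
| "ineq_normal (Cap B) = (\<chi> k. of_bool (k \<in> B))"

primrec ineq_bound :: "nat \<Rightarrow> 'i qbar_ineq \<Rightarrow> real" where
  "ineq_bound n (Nonneg i) = 0"
| "ineq_bound n (Cap B) = hit_count n (card B)"

definition qbar_constraints :: "'i::finite \<Rightarrow> 'i qbar_ineq set" where
  "qbar_constraints j = Nonneg ` (UNIV - {j}) \<union> Cap ` {B. B \<subseteq> UNIV - {j} \<and> B \<noteq> {}}"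

lemma inner_ineq_normal_Nonneg [simp]: "ineq_normal (Nonneg i) \<bullet> x = - x $ i"
  by (simp add: inner_axis')

lemma inner_ineq_normal_Cap [simp]: "ineq_normal (Cap B) \<bullet> x = (\<Sum>k\<in>B. x $ k)"
  by (simp add: inner_vec_def Int_def)

lemma ineq_normal_Cap_nth [simp]: "ineq_normal (Cap B) $ k = of_bool (k \<in> B)"
  by simp

(* Keep the normals folded, so that the inner-product rules above apply. *)
declare ineq_normal.simps [simp del]

lemma inner_one_vec: "(1::real^'i) \<bullet> x = sum (($) x) UNIV"
  by (simp add: inner_vec_def)

locale qbar_setting =
  fixes j :: "'m::finite" and n :: nat
  assumes card_UNIV_eq: "CARD('m) = n + 1"
begin

definition J :: "'m set" where
  "J = UNIV - {j}"

lemma mem_J: "i \<in> J \<longleftrightarrow> i \<noteq> j"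
  by (simp add: J_def)

lemma card_J: "card J = n"
  using card_UNIV_eq by (simp add: J_def card_Diff_singleton)

lemma card_le_n: "B \<subseteq> J \<Longrightarrow> card B \<le> n"
  using card_J card_mono[of J B] by simp

lemma sum_UNIV_split: "sum (($) x) UNIV = x $ j + sum (($) x) J"
  using sum.remove[of UNIV j "($) x"] by (simp add: J_def)

lemma qbar_constraints_eq: "qbar_constraints j = Nonneg ` J \<union> Cap ` {B. B \<subseteq> J \<and> B \<noteq> {}}"
  by (simp add: qbar_constraints_def J_def)

sublocale halfspace_system 1 "hit_count n n" "qbar_constraints j" ineq_normal "ineq_bound n"
  by unfold_locales (simp add: qbar_constraints_def)

lemma mem_region_iff:
  "x \<in> region \<longleftrightarrow> sum (($) x) UNIV = hit_count n n \<and> (\<forall>i\<in>J. 0 \<le> x $ i)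
     \<and> (\<forall>B. B \<subseteq> J \<and> B \<noteq> {} \<longrightarrow> (\<Sum>k\<in>B. x $ k) \<le> hit_count n (card B))"
  unfolding region_def by (auto simp: qbar_constraints_eq inner_one_vec ball_Un)

definition tight_sets :: "real^'m \<Rightarrow> 'm set set" where
  "tight_sets x = {B. Cap B \<in> tight x}"

definition zeros :: "real^'m \<Rightarrow> 'm set" where
  "zeros x = {i. Nonneg i \<in> tight x}"

lemma mem_tight_sets:
  "B \<in> tight_sets x \<longleftrightarrow> B \<subseteq> J \<and> B \<noteq> {} \<and> (\<Sum>k\<in>B. x $ k) = hit_count n (card B)"
  unfolding tight_sets_def tight_def by (auto simp: qbar_constraints_eq)

lemma mem_zeros: "i \<in> zeros x \<longleftrightarrow> i \<in> J \<and> x $ i = 0"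
  unfolding zeros_def tight_def by (auto simp: qbar_constraints_eq)

lemma card_tight_eq: "card (tight x) = card (zeros x) + card (tight_sets x)"
proof -
  have "tight x = Nonneg ` zeros x \<union> Cap ` tight_sets x"
  proof (intro set_eqI)
    fix c show "c \<in> tight x \<longleftrightarrow> c \<in> Nonneg ` zeros x \<union> Cap ` tight_sets x"
      by (cases c) (auto simp: zeros_def tight_sets_def)
  qed
  moreover have "card (Nonneg ` zeros x) = card (zeros x)" "card (Cap ` tight_sets x) = card (tight_sets x)"
    by (simp_all add: card_image inj_on_def)
  moreover have "Nonneg ` zeros x \<inter> Cap ` tight_sets x = {}"
    by auto
  ultimately show ?thesis
    by (simp add: card_Un_disjoint)
qed

lemma tight_sets_chain:
  assumes x: "x \<in> region"
  shows "chain\<^sub>\<subseteq> (tight_sets x)"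
  unfolding chain_subset_def
proof (intro ballI, rule ccontr)
  fix B B' assume B: "B \<in> tight_sets x" and B': "B' \<in> tight_sets x" and "\<not> (B \<subseteq> B' \<or> B' \<subseteq> B)"
  have "card (B \<inter> B') < card B" "card (B \<inter> B') < card B'"
    using \<open>\<not> (B \<subseteq> B' \<or> B' \<subseteq> B)\<close> by (auto intro!: psubset_card_mono)
  moreover have "card (B \<union> B') + card (B \<inter> B') = card B + card B'"
    using card_Un_Int[of B B'] by simp
  ultimately have "hit_count n (card (B \<union> B')) + hit_count n (card (B \<inter> B'))
      < hit_count n (card B) + hit_count n (card B')"
    by (rule hit_count_add_less)
  moreover have "(\<Sum>k\<in>B \<union> B'. x $ k) \<le> hit_count n (card (B \<union> B'))"
    using x B B' by (auto simp: mem_region_iff mem_tight_sets)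
  moreover have "(\<Sum>k\<in>B \<inter> B'. x $ k) \<le> hit_count n (card (B \<inter> B'))"
  proof (cases "B \<inter> B' = {}")
    case False
    then show ?thesis
      using x B unfolding mem_region_iff mem_tight_sets by blast
  qed simp
  moreover have "(\<Sum>k\<in>B \<union> B'. x $ k) + (\<Sum>k\<in>B \<inter> B'. x $ k) = (\<Sum>k\<in>B. x $ k) + (\<Sum>k\<in>B'. x $ k)"
    by (simp add: sum.union_inter)
  ultimately show False
    using B B' by (simp add: mem_tight_sets)
qed

lemma tight_sets_disjoint_zeros:
  assumes x: "x \<in> region" and B: "B \<in> tight_sets x"
  shows "B \<inter> zeros x = {}"
proof -
  have "0 < x $ i" if "i \<in> B" for i
  proof -
    have "finite B" "card B \<le> n" "B - {i} \<subseteq> J"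
      using B card_le_n by (auto simp: mem_tight_sets)
    have "(\<Sum>k\<in>B - {i}. x $ k) \<le> hit_count n (card (B - {i}))"
    proof (cases "B - {i} = {}")
      case True
      then show ?thesis
        by (simp only: True) simp
    next
      case False
      then show ?thesis
        using x \<open>B - {i} \<subseteq> J\<close> unfolding mem_region_iff by blast
    qed
    moreover have "hit_count n (card B - 1) < hit_count n (card B)"
    proof -
      have "card B > 0"
        using \<open>finite B\<close> that by (auto simp: card_gt_0_iff)
      then show ?thesis
        using \<open>card B \<le> n\<close> by (intro hit_count_strict_mono) simp_all
    qed
    moreover have "(\<Sum>k\<in>B. x $ k) = x $ i + (\<Sum>k\<in>B - {i}. x $ k)"
      using \<open>finite B\<close> that by (simp add: sum.remove)
    ultimately show ?thesis
      using B that \<open>finite B\<close> by (simp add: mem_tight_sets)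
  qed
  then show ?thesis
    by (force simp: mem_zeros)
qed

lemma card_tight_le:
  assumes x: "x \<in> region"
  shows "card (tight x) \<le> n"
proof -
  let ?U = "\<Union>(tight_sets x)"
  have U: "?U \<subseteq> J"
    by (auto simp: mem_tight_sets)
  have Z: "zeros x \<subseteq> J"
    by (auto simp: mem_zeros)
  have "card (tight_sets x) \<le> card ?U"
    using tight_sets_chain[OF x] U
    by (intro card_le_card_Union_chain) (auto simp: mem_tight_sets)
  moreover have "card (zeros x) + card ?U = card (zeros x \<union> ?U)"
    using tight_sets_disjoint_zeros[OF x] U Z
    by (intro card_Un_disjoint[symmetric]) auto
  moreover have "card (zeros x \<union> ?U) \<le> n"
    using U Z by (intro card_le_n) auto
  ultimately show ?thesis
    unfolding card_tight_eq by linarith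
qed

lemma index_family_eq: "index_family j = insert j ` {T. T \<subseteq> J \<and> card T \<in> {1, 2}}"
  by (auto simp: index_family_def J_def)

lemma finite_index_family: "finite (index_family j)"
  by (simp add: index_family_eq)

lemma card_index_family_hitting:
  assumes B: "B \<subseteq> J"
  shows "real (card {S \<in> index_family j. S \<inter> B \<noteq> {}}) = hit_count n (card B)"
proof -
  let ?T = "{T. T \<subseteq> J \<and> card T \<in> {1, 2} \<and> T \<inter> B \<noteq> {}}"
  have "inj_on (insert j) ?T"
  proof (rule inj_onI)
    fix T T' assume "T \<in> ?T" "T' \<in> ?T" "insert j T = insert j T'"
    moreover from this have "j \<notin> T" "j \<notin> T'"
      by (auto simp: mem_J)
    ultimately show "T = T'"
      by (metis Diff_insert_absorb)
  qed
  moreover have "insert j T \<inter> B = T \<inter> B" for T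
    using B by (auto simp: mem_J)
  then have "{S \<in> index_family j. S \<inter> B \<noteq> {}} = insert j ` ?T"
    unfolding index_family_eq by auto
  ultimately show ?thesis
    using card_small_subsets_hitting[OF _ B] card_J by (simp add: card_image J_def)
qed

lemma card_index_family: "real (card (index_family j)) = hit_count n n"
proof -
  have "{S \<in> index_family j. S \<inter> J \<noteq> {}} = index_family j"
    by (auto simp: index_family_eq Int_absorb2)
  then show ?thesis
    using card_index_family_hitting[of J] card_J by simp
qed

lemma Qbar_subset_region: "Qbar j \<subseteq> region"
proof
  fix x assume "x \<in> Qbar j"
  then have x: "x \<in> minkowski_sum (index_family j) simplexS"
    by (simp add: Qbar_def)
  note component = minkowski_sum_simplexS_component[OF x finite_index_family]
  have "(\<Sum>k\<in>B. x $ k) \<le> hit_count n (card B)" if "B \<subseteq> J" for B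
    using component(2)[of B] card_index_family_hitting[OF that] by simp
  then show "x \<in> region"
    using component(1,3) card_index_family by (simp add: mem_region_iff)
qed

(* Minimising the number of tight sets that avoid k picks an element lying in every tight set
   that meets S. *)
definition greedy_choice :: "real^'m \<Rightarrow> 'm set \<Rightarrow> 'm" where
  "greedy_choice x S = arg_min_on (\<lambda>k. card {B \<in> tight_sets x. k \<notin> B}) (S - zeros x)"

definition greedy_point :: "real^'m \<Rightarrow> real^'m" where
  "greedy_point x = (\<Sum>S\<in>index_family j. axis (greedy_choice x S) 1)"

lemma greedy_choiceD:
  assumes "S \<in> index_family j"
  shows "greedy_choice x S \<in> S - zeros x"
    and "k \<in> S - zeros x \<Longrightarrow>
      card {B \<in> tight_sets x. greedy_choice x S \<notin> B} \<le> card {B \<in> tight_sets x. k \<notin> B}"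
proof -
  have "j \<in> S - zeros x"
    using assms by (auto simp: index_family_eq mem_zeros mem_J)
  then have "finite (S - zeros x)" "S - zeros x \<noteq> {}"
    by auto
  from arg_min_if_finite[OF this, of "\<lambda>k. card {B \<in> tight_sets x. k \<notin> B}"]
  show "greedy_choice x S \<in> S - zeros x"
    and "k \<in> S - zeros x \<Longrightarrow>
      card {B \<in> tight_sets x. greedy_choice x S \<notin> B} \<le> card {B \<in> tight_sets x. k \<notin> B}"
    unfolding greedy_choice_def by (auto simp: not_less)
qed

lemma greedy_point_in_Qbar: "greedy_point x \<in> Qbar j"
  unfolding Qbar_def minkowski_sum_def greedy_point_def
  using greedy_choiceD(1) by (auto intro!: exI[of _ "\<lambda>S. axis (greedy_choice x S) 1"] axis_in_simplexS)

lemma greedy_choice_mem_tight_set_iff: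
  assumes x: "x \<in> region" and B: "B \<in> tight_sets x" and S: "S \<in> index_family j"
  shows "greedy_choice x S \<in> B \<longleftrightarrow> S \<inter> B \<noteq> {}"
proof
  show "greedy_choice x S \<in> B \<Longrightarrow> S \<inter> B \<noteq> {}"
    using greedy_choiceD(1)[OF S] by blast
  assume "S \<inter> B \<noteq> {}"
  then obtain b where "b \<in> S" "b \<in> B"
    by blast
  then have "b \<in> S - zeros x"
    using tight_sets_disjoint_zeros[OF x B] by blast
  then show "greedy_choice x S \<in> B"
    using chain_mem_of_card_avoiding_le[OF tight_sets_chain[OF x] finite_class.finite B \<open>b \<in> B\<close>]
      greedy_choiceD(2)[OF S] by blast
qed

lemma greedy_point_tight:
  assumes x: "x \<in> region" and c: "c \<in> tight x"
  shows "ineq_normal c \<bullet> greedy_point x = ineq_bound n c"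
proof (cases c)
  case (Nonneg i)
  then have "i \<in> zeros x"
    using c by (simp add: zeros_def)
  then have "{S \<in> index_family j. greedy_choice x S \<in> {i}} = {}"
    using greedy_choiceD(1) by auto
  then show ?thesis
    using sum_axis_count[OF finite_index_family, of "greedy_choice x" "{i}"] Nonneg
    by (simp add: greedy_point_def inner_axis')
next
  case (Cap B)
  then have B: "B \<in> tight_sets x"
    using c by (simp add: tight_sets_def)
  then have "{S \<in> index_family j. greedy_choice x S \<in> B} = {S \<in> index_family j. S \<inter> B \<noteq> {}}"
    using greedy_choice_mem_tight_set_iff[OF x B] by blast
  then show ?thesis
    using sum_axis_count[OF finite_index_family, of "greedy_choice x" B] card_index_family_hitting B Cap
    by (simp add: greedy_point_def mem_tight_sets)
qed

lemma extreme_point_in_Qbar: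
  assumes x: "x extreme_point_of region"
  shows "x \<in> Qbar j"
proof -
  have "x \<in> region"
    using x by (simp add: extreme_point_of_def)
  have "greedy_point x \<in> region"
    using Qbar_subset_region greedy_point_in_Qbar by blast
  have "greedy_point x - x = 0"
  proof (rule extreme_point_region_direction[OF x])
    show "1 \<bullet> (greedy_point x - x) = 0"
      using \<open>x \<in> region\<close> \<open>greedy_point x \<in> region\<close> by (simp add: region_def inner_diff_right)
    show "ineq_normal c \<bullet> (greedy_point x - x) = 0" if "c \<in> tight x" for c
      using greedy_point_tight[OF \<open>x \<in> region\<close> that] that by (simp add: tight_def inner_diff_right)
  qed
  then show ?thesis
    using greedy_point_in_Qbar[of x] by simp
qed

lemma bounded_region: "bounded region"
proof -
  have "region \<subseteq> cbox 0 (\<chi> k. hit_count n n)"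
  proof
    fix x assume x: "x \<in> region"
    have nonneg: "0 \<le> x $ i" if "i \<in> J" for i
      using x that by (simp add: mem_region_iff)
    have "sum (($) x) J \<le> hit_count n n"
    proof (cases "J = {}")
      case True
      then show ?thesis
        using hit_count_ge[of n n] by simp
    next
      case False
      then show ?thesis
        using x card_J unfolding mem_region_iff by (metis subset_refl)
    qed
    moreover have "x $ i \<le> sum (($) x) J" if "i \<in> J" for i
      using nonneg that by (intro member_le_sum) (auto simp: J_def)
    moreover have "0 \<le> sum (($) x) J"
      using nonneg by (intro sum_nonneg) auto
    moreover have "x $ j = hit_count n n - sum (($) x) J"
      using x sum_UNIV_split[of x] by (simp add: mem_region_iff)
    ultimately have "0 \<le> x $ k \<and> x $ k \<le> hit_count n n" for k
      using nonneg[of k] by (cases "k = j") (force simp: mem_J)+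
    then show "x \<in> cbox 0 (\<chi> k. hit_count n n)"
      by (simp add: mem_box_cart)
  qed
  then show ?thesis
    using bounded_cbox bounded_subset by blast
qed

lemma polytope_region: "polytope region"
  using polyhedron_region bounded_region polytope_eq_bounded_polyhedron by blast

lemma Qbar_eq_region: "Qbar j = region"
proof
  show "Qbar j \<subseteq> region"
    by (rule Qbar_subset_region)
  have "region = convex hull {x. x extreme_point_of region}"
    using polytope_region by (intro Krein_Milman_Minkowski polytope_imp_compact polytope_imp_convex)
  also have "\<dots> \<subseteq> Qbar j"
    unfolding Qbar_def
    by (intro hull_minimal convex_minkowski_sum convex_simplexS)
      (auto dest: extreme_point_in_Qbar simp: Qbar_def)
  finally show "region \<subseteq> Qbar j" .
qed

definition lift :: "real^'m \<Rightarrow> real^'m" where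
  "lift y = (\<chi> k. if k = j then hit_count n n - sum (($) y) J else y $ k)"

lemma lift_nth: "i \<in> J \<Longrightarrow> lift y $ i = y $ i"
  by (simp add: lift_def mem_J)

lemma inner_one_lift: "1 \<bullet> lift y = hit_count n n"
proof -
  have "sum (($) (lift y)) J = sum (($) y) J"
    by (intro sum.cong) (simp_all add: lift_nth)
  then show ?thesis
    using sum_UNIV_split[of "lift y"] by (simp add: inner_one_vec lift_def)
qed

definition interior_point :: "real^'m" where
  "interior_point = lift (\<chi> k. 1/2)"

(* Spreading f(|B|) + 1/2 evenly over B violates the constraint of B, and no other one. *)
definition cap_height :: "'m set \<Rightarrow> real" where
  "cap_height B = (hit_count n (card B) + 1/2) / real (card B)"

primrec violator :: "'m qbar_ineq \<Rightarrow> real^'m" where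
  "violator (Nonneg i) = lift (- axis i 1)"
| "violator (Cap B) = lift (cap_height B *\<^sub>R ineq_normal (Cap B))"

lemma mem_qbar_constraintsE:
  assumes "c \<in> qbar_constraints j"
  obtains (Nonneg) i where "c = Nonneg i" "i \<in> J"
    | (Cap) B where "c = Cap B" "B \<subseteq> J" "B \<noteq> {}" "0 < card B" "card B \<le> n"
  using assms card_le_n by (auto simp: qbar_constraints_eq card_gt_0_iff)

lemma interior_point_strict:
  assumes "c \<in> qbar_constraints j"
  shows "ineq_normal c \<bullet> interior_point < ineq_bound n c"
  using assms
proof (cases rule: mem_qbar_constraintsE)
  case (Cap B)
  have "(\<Sum>k\<in>B. interior_point $ k) = real (card B) / 2"
    using Cap by (simp add: interior_point_def lift_nth subsetD)
  then show ?thesis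
    using Cap hit_count_ge[of "card B" n] by simp
qed (simp add: interior_point_def lift_nth)

lemma sum_violator_Cap:
  assumes "C \<subseteq> J"
  shows "(\<Sum>k\<in>C. violator (Cap B) $ k) = cap_height B * real (card (C \<inter> B))"
proof -
  have "(\<Sum>k\<in>C. violator (Cap B) $ k) = (\<Sum>k\<in>C. cap_height B * of_bool (k \<in> B))"
    using assms by (intro sum.cong) (auto simp: lift_nth)
  also have "\<dots> = cap_height B * (\<Sum>k\<in>C. of_bool (k \<in> B))"
    by (simp only: sum_distrib_left)
  finally show ?thesis
    by simp
qed

lemma violator_violates:
  assumes "c \<in> qbar_constraints j"
  shows "ineq_bound n c < ineq_normal c \<bullet> violator c"
  using assms
proof (cases rule: mem_qbar_constraintsE)
  case (Cap B)
  then show ?thesis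
    using sum_violator_Cap[of B B] by (simp add: cap_height_def)
qed (simp add: lift_nth axis_def)

lemma cap_height_mult_card_le:
  assumes B: "B \<subseteq> J" "B \<noteq> {}" and C: "C \<subseteq> J" "C \<noteq> B"
  shows "cap_height B * real (card (C \<inter> B)) \<le> hit_count n (card C)"
proof (cases "B \<subseteq> C")
  case True
  then have "card B < card C"
    using C by (intro psubset_card_mono) auto
  then have "hit_count n (Suc (card B)) \<le> hit_count n (card C)"
    using card_le_n[OF C(1)] by (intro hit_count_mono) auto
  moreover have "cap_height B * real (card B) = hit_count n (card B) + 1/2"
    using B by (simp add: cap_height_def)
  ultimately show ?thesis
    using True \<open>card B < card C\<close> card_le_n[OF C(1)] by (simp add: hit_count_Suc Int_absorb1)
next
  case False
  then have "card (C \<inter> B) < card B"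
    by (intro psubset_card_mono) auto
  then have "cap_height B * real (card (C \<inter> B)) \<le> hit_count n (card (C \<inter> B))"
    using hit_count_average_le[of "card (C \<inter> B)" "card B" n] B
    by (simp add: cap_height_def field_simps)
  also have "\<dots> \<le> hit_count n (card C)"
    using card_le_n[OF C(1)] by (intro hit_count_mono card_mono) auto
  finally show ?thesis .
qed

lemma violator_satisfies_others:
  assumes c: "c \<in> qbar_constraints j" and c': "c' \<in> qbar_constraints j" "c' \<noteq> c"
  shows "ineq_normal c' \<bullet> violator c \<le> ineq_bound n c'"
  using c
proof (cases rule: mem_qbar_constraintsE)
  case (Nonneg i)
  from c' show ?thesis
  proof (cases rule: mem_qbar_constraintsE)
    case (Cap C)
    have "(\<Sum>k\<in>C. violator (Nonneg i) $ k) \<le> 0"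
      using Cap by (intro sum_nonpos) (auto simp: lift_nth axis_def subsetD)
    then show ?thesis
      using Nonneg Cap hit_count_ge[of "card C" n] by simp
  qed (use Nonneg in \<open>auto simp: lift_nth axis_def\<close>)
next
  case (Cap B)
  from c' show ?thesis
  proof (cases rule: mem_qbar_constraintsE)
    case (Nonneg i)
    have "0 \<le> cap_height B"
      using Cap hit_count_ge[of "card B" n] by (simp add: cap_height_def)
    then show ?thesis
      using Cap Nonneg by (simp add: lift_nth)
  next
    case (Cap C)
    then show ?thesis
      using \<open>c = Cap B\<close> \<open>B \<subseteq> J\<close> \<open>B \<noteq> {}\<close> c' sum_violator_Cap[of C B] cap_height_mult_card_le[of B C]
      by simp
  qed
qed

lemma qbar_irredundant:
  "irredundant_halfspace_system 1 (hit_count n n) (qbar_constraints j) ineq_normal (ineq_bound n)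
     interior_point violator"
  using interior_point_strict violator_violates violator_satisfies_others
  by unfold_locales (auto simp: interior_point_def inner_one_lift qbar_constraints_def intro: inner_one_lift)

lemma aff_dim_region_eq: "aff_dim region = int n"
proof -
  have "(1::real^'m) \<noteq> 0"
    by (simp add: vec_eq_iff)
  then show ?thesis
    using irredundant_halfspace_system.aff_dim_region[OF qbar_irredundant] card_UNIV_eq by simp
qed

lemma card_facets_containing_vertex:
  assumes "{v} face_of region"
  shows "card {F. F facet_of region \<and> v \<in> F} = n"
proof -
  have v: "v extreme_point_of region"
    using assms face_of_singleton by blast
  then have "v \<in> region"
    by (simp add: extreme_point_of_def)
  have "n \<le> card (tight v)"
    using card_tight_extreme_point[OF v] card_UNIV_eq by simp
  moreover have "card (tight v) \<le> n"
    using card_tight_le \<open>v \<in> region\<close> .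
  ultimately show ?thesis
    using irredundant_halfspace_system.card_facets_containing[OF qbar_irredundant \<open>v \<in> region\<close>] by simp
qed

end

theorem mainTheorem11:
  fixes n :: nat and j :: "'m::finite"
  assumes "n \<ge> 1" and "CARD('m) = n + 1"
  shows "polytope (Qbar j) \<and> aff_dim (Qbar j) = int n \<and> simple_polytope (Qbar j)"
proof -
  interpret qbar_setting j n
    by unfold_locales (rule assms(2))
  show ?thesis
    unfolding simple_polytope_def Qbar_eq_region
    using polytope_region aff_dim_region_eq card_facets_containing_vertex by simp
qed

end
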